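(* Let $r_o>0$, $\tau>0$, $\kappa>0$, $\alpha>0$ and $\beta\in(0,1)$ be constants. For $m<0$, let $u_m:[0,\infty)\to[r_o,\infty)$ be the solution of $$u_m(0)=r_o,\qquad u_m'(s)=\left(1-\frac{2m}{u_m(s)}+\kappa^2u_m^2(s)\right)^{1/2},$$ and set $$k=\tau\left(1-\frac{2m}{r_o}+\kappa^2r_o^2\right)^{-1/2}.$$ (i) For every $m<0$ with $k^2<\beta$, there exists a positive constant $A_o$ such that $$(\beta-k^2)+\left[3\kappa^2(1-k^2)-\tfrac12\alpha A_o^{-2}\right]u_m^2(A_ok)=0.$$ (ii) The set of all such $A_o$ is bounded from above and bounded away from zero as $m\to-\infty$. *)

theory Defs
  imports "HOL-Analysis.Analysis"
begin

definition kconst :: "real \<Rightarrow> real \<Rightarrow> real \<Rightarrow> real \<Rightarrow> real" where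
  "kconst r\<^sub>o \<tau> \<kappa> m = \<tau> * (1 - 2*m/r\<^sub>o + \<kappa>^2 * r\<^sub>o^2) powr (-1/2)"

end

theory Submission
  imports Defs "HOL-Real_Asymp.Real_Asymp"
begin

text \<open>
  Write \<open>X(A) = \<alpha> A\<^sup>-\<^sup>2 / 2\<close> and \<open>c = 3\<kappa>\<^sup>2(1 - k\<^sup>2)\<close>, so that the balance equation reads
  \<open>(\<beta> - k\<^sup>2) + (c - X(A)) u(Ak)\<^sup>2 = 0\<close>. Since \<open>u \<ge> r\<^sub>o\<close>, its left-hand side is
  \<open>\<le> 0\<close> where \<open>X(A) = c + \<beta>/r\<^sub>o\<^sup>2\<close> and equals \<open>\<beta> - k\<^sup>2 > 0\<close> where \<open>X(A) = c\<close>;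
  \<open>u\<close> is continuous, so the intermediate value theorem gives a root. Conversely every
  root satisfies \<open>c < X(A) \<le> c + \<beta>/r\<^sub>o\<^sup>2\<close>. As \<open>m \<rightarrow> -\<infinity>\<close> we have \<open>k \<rightarrow> 0\<close>, so
  eventually \<open>3\<kappa>\<^sup>2/2 \<le> c \<le> 3\<kappa>\<^sup>2\<close>, which confines \<open>X(A)\<close>, hence \<open>A\<close>, to a fixed
  compact subinterval of \<open>(0, \<infinity>)\<close>.
\<close>

lemma kconst_pos:
  assumes "0 < r" "m \<le> 0" "0 < \<tau>"
  shows "0 < kconst r \<tau> \<kappa> m"
proof -
  have "m / r \<le> 0" "0 \<le> \<kappa>^2*r^2"
    using assms by (simp_all add: divide_nonpos_pos)
  then have "0 < 1 - 2*m/r + \<kappa>^2*r^2" by linarith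
  then show ?thesis
    using assms unfolding kconst_def by simp
qed

lemma kconst_tendsto_at_bot:
  assumes "0 < r"
  shows "(kconst r \<tau> \<kappa> \<longlongrightarrow> 0) at_bot"
  unfolding kconst_def using assms by real_asymp

lemma half_mul_powr_minus_two_sqrt:
  assumes "0 < \<alpha>" "0 < D"
  shows "1/2 * \<alpha> * sqrt (\<alpha> / (2*D)) powr (-2) = D"
  using assms by (simp add: powr_minus_divide)

lemma less_half_mul_powr_minus_two_iff:
  assumes "0 < \<alpha>" "0 < A" "0 < D"
  shows "D < 1/2 * \<alpha> * A powr (-2) \<longleftrightarrow> A < sqrt (\<alpha> / (2*D))"
proof -
  have "D < 1/2 * \<alpha> * A powr (-2) \<longleftrightarrow> A^2 < \<alpha> / (2*D)"
    using assms by (simp add: powr_minus_divide field_simps)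
  also have "\<dots> \<longleftrightarrow> A < sqrt (\<alpha> / (2*D))"
    using assms by (metis abs_of_pos real_sqrt_abs real_sqrt_less_iff)
  finally show ?thesis .
qed

lemma balance_equation_has_root:
  fixes v :: "real \<Rightarrow> real"
  assumes v_cont: "continuous_on {0..} v" and v_ge: "\<And>s. 0 \<le> s \<Longrightarrow> r \<le> v s"
    and "0 < r" "0 < \<alpha>" "0 < c" "0 < k" "k^2 < \<beta>"
  shows "\<exists>A>0. (\<beta> - k^2) + (c - 1/2 * \<alpha> * A powr (-2)) * (v (A*k))^2 = 0"
proof -
  define F where "F A = (\<beta> - k^2) + (c - 1/2 * \<alpha> * A powr (-2)) * (v (A*k))^2" for A
  define a where "a = sqrt (\<alpha> / (2 * (c + \<beta>/r^2)))"
  define b where "b = sqrt (\<alpha> / (2*c))"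
  have "0 < \<beta>" using \<open>k^2 < \<beta>\<close> zero_le_power2[of k] by linarith
  then have "0 < \<beta>/r^2" using \<open>0 < r\<close> by simp
  then have "0 < a" "a \<le> b"
    using assms unfolding a_def b_def by (simp_all add: frac_le)
  have "continuous_on {a..b} (\<lambda>A. (\<beta> - k^2) + (c - 1/2 * \<alpha> * (1 / A^2)) * (v (A*k))^2)"
    using \<open>0 < a\<close> \<open>0 < k\<close>
    by (intro continuous_intros continuous_on_compose2[OF v_cont]) auto
  then have "continuous_on {a..b} F"
    by (rule continuous_on_eq) (use \<open>0 < a\<close> in \<open>simp add: F_def powr_minus_divide\<close>)
  moreover have "F a \<le> 0"
  proof -
    have "r^2 \<le> (v (a*k))^2"
      using v_ge[of "a*k"] \<open>0 < a\<close> \<open>0 < k\<close> \<open>0 < r\<close> by (simp add: power_mono)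
    then have "\<beta> \<le> \<beta>/r^2 * (v (a*k))^2"
      using \<open>0 < \<beta>\<close> \<open>0 < r\<close> by (simp add: field_simps)
    moreover have "1/2 * \<alpha> * a powr (-2) = c + \<beta>/r^2"
      unfolding a_def using assms \<open>0 < \<beta>/r^2\<close> by (intro half_mul_powr_minus_two_sqrt) auto
    then have "F a = (\<beta> - k^2) - \<beta>/r^2 * (v (a*k))^2"
      unfolding F_def by (simp add: algebra_simps)
    ultimately show ?thesis using zero_le_power2[of k] by linarith
  qed
  moreover have "1/2 * \<alpha> * b powr (-2) = c"
    unfolding b_def using assms by (intro half_mul_powr_minus_two_sqrt)
  then have "F b = \<beta> - k^2"
    unfolding F_def by simp
  ultimately obtain A where "a \<le> A" "F A = 0"
    using IVT'[of F a 0 b] \<open>a \<le> b\<close> \<open>k^2 < \<beta>\<close> by auto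
  with \<open>0 < a\<close> show ?thesis
    unfolding F_def by (intro exI[of _ A]) auto
qed

lemma balance_equation_root_bounds:
  fixes \<alpha> \<beta> c k r A U :: real
  assumes eq: "(\<beta> - k^2) + (c - 1/2 * \<alpha> * A powr (-2)) * U = 0"
    and "0 < r" "r^2 \<le> U" "k^2 < \<beta>"
  shows "c < 1/2 * \<alpha> * A powr (-2)" and "1/2 * \<alpha> * A powr (-2) \<le> c + \<beta>/r^2"
proof -
  define X where "X = 1/2 * \<alpha> * A powr (-2)"
  have "0 < r^2" using \<open>0 < r\<close> by simp
  then have "0 < U" using \<open>r^2 \<le> U\<close> by linarith
  have X: "X = c + (\<beta> - k^2) / U"
    using eq \<open>0 < U\<close> unfolding X_def by (simp add: field_simps)
  have "0 < (\<beta> - k^2) / U"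
    using \<open>k^2 < \<beta>\<close> \<open>0 < U\<close> by simp
  moreover have "(\<beta> - k^2) / U \<le> \<beta> / r^2"
    using \<open>k^2 < \<beta>\<close> \<open>0 < r^2\<close> \<open>r^2 \<le> U\<close> zero_le_power2[of k] by (intro frac_le) linarith+
  ultimately show "c < X" "X \<le> c + \<beta>/r^2"
    unfolding X by simp_all
qed

lemma balance_equation_root_between:
  fixes \<alpha> \<beta> \<kappa> k r A U :: real
  assumes eq: "(\<beta> - k^2) + (3*\<kappa>^2*(1 - k^2) - 1/2 * \<alpha> * A powr (-2)) * U = 0"
    and "0 < \<alpha>" "0 < \<kappa>" "0 < A" "0 < r" "r^2 \<le> U" "k^2 < \<beta>" "k^2 \<le> 1/2"
  shows "sqrt (\<alpha> / (2 * (3*\<kappa>^2 + \<beta>/r^2))) \<le> A \<and> A \<le> sqrt (\<alpha> / (2 * (3/2*\<kappa>^2)))"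
proof
  have "3/2*\<kappa>^2 \<le> 3*\<kappa>^2*(1 - k^2)"
    using mult_left_mono[of "k^2" "1/2" "3*\<kappa>^2"] \<open>k^2 \<le> 1/2\<close> by (simp add: algebra_simps)
  also have "\<dots> < 1/2 * \<alpha> * A powr (-2)"
    using balance_equation_root_bounds(1)[OF eq \<open>0 < r\<close>] assms by simp
  finally have "A < sqrt (\<alpha> / (2 * (3/2*\<kappa>^2)))"
    using less_half_mul_powr_minus_two_iff[of \<alpha> A "3/2*\<kappa>^2"] assms by auto
  then show "A \<le> sqrt (\<alpha> / (2 * (3/2*\<kappa>^2)))"
    by simp
next
  have "1/2 * \<alpha> * A powr (-2) \<le> 3*\<kappa>^2*(1 - k^2) + \<beta>/r^2"
    using balance_equation_root_bounds(2)[OF eq \<open>0 < r\<close>] assms by simp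
  also have "\<dots> \<le> 3*\<kappa>^2 + \<beta>/r^2"
    by (simp add: algebra_simps)
  finally have "\<not> 3*\<kappa>^2 + \<beta>/r^2 < 1/2 * \<alpha> * A powr (-2)"
    by simp
  moreover have "0 < 3*\<kappa>^2 + \<beta>/r^2"
    using assms by (intro add_pos_pos divide_pos_pos) (auto intro: le_less_trans[OF zero_le_power2])
  ultimately show "sqrt (\<alpha> / (2 * (3*\<kappa>^2 + \<beta>/r^2))) \<le> A"
    using less_half_mul_powr_minus_two_iff[of \<alpha> A "3*\<kappa>^2 + \<beta>/r^2"] assms by auto
qed

lemma balance_equation_roots_eventually_bounded:
  fixes k :: "'a \<Rightarrow> real" and v :: "'a \<Rightarrow> real \<Rightarrow> real" and \<alpha> \<beta> \<kappa> r :: real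
  assumes "(k \<longlongrightarrow> 0) F" "\<forall>\<^sub>F m in F. 0 \<le> k m" "\<forall>\<^sub>F m in F. \<forall>s\<ge>0. r \<le> v m s"
    and "0 < \<alpha>" "0 < \<beta>" "0 < \<kappa>" "0 < r"
  shows "\<exists>c C. 0 < c \<and>
           (\<forall>\<^sub>F m in F. \<forall>A>0.
              (\<beta> - (k m)^2) + (3*\<kappa>^2*(1 - (k m)^2) - 1/2 * \<alpha> * A powr (-2)) * (v m (A * k m))^2 = 0
              \<longrightarrow> c \<le> A \<and> A \<le> C)"
proof (intro exI conjI)
  show "0 < sqrt (\<alpha> / (2 * (3*\<kappa>^2 + \<beta>/r^2)))"
    using assms by (simp add: add_pos_pos)
  have "((\<lambda>m. (k m)^2) \<longlongrightarrow> 0) F"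
    using tendsto_power[OF assms(1), of 2] by simp
  then have "\<forall>\<^sub>F m in F. (k m)^2 < min (1/2) \<beta>"
    using assms by (intro order_tendstoD(2)) auto
  with assms(2,3) show "\<forall>\<^sub>F m in F. \<forall>A>0.
      (\<beta> - (k m)^2) + (3*\<kappa>^2*(1 - (k m)^2) - 1/2 * \<alpha> * A powr (-2)) * (v m (A * k m))^2 = 0
      \<longrightarrow> sqrt (\<alpha> / (2 * (3*\<kappa>^2 + \<beta>/r^2))) \<le> A \<and> A \<le> sqrt (\<alpha> / (2 * (3/2*\<kappa>^2)))"
  proof eventually_elim
    case (elim m)
    then have "(k m)^2 < \<beta>" "(k m)^2 \<le> 1/2" "r^2 \<le> (v m (A * k m))^2" if "0 < A" for A
      using that \<open>0 < r\<close> by (auto intro!: power_mono)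
    then show ?case
      using balance_equation_root_between assms by blast
  qed
qed

theorem lemma4p1:
  fixes r\<^sub>o \<tau> \<kappa> \<alpha> \<beta> :: real
    and u :: "real \<Rightarrow> real \<Rightarrow> real"
  assumes "r\<^sub>o > 0" "\<tau> > 0" "\<kappa> > 0" "\<alpha> > 0" "0 < \<beta>" "\<beta> < 1"
    and u_init: "\<And>m. m < 0 \<Longrightarrow> u m 0 = r\<^sub>o"
    and u_range: "\<And>m s. m < 0 \<Longrightarrow> s \<ge> 0 \<Longrightarrow> u m s \<ge> r\<^sub>o"
    and u_ode: "\<And>m s. m < 0 \<Longrightarrow> s \<ge> 0 \<Longrightarrow>
      (u m has_real_derivative (1 - 2*m / u m s + \<kappa>^2 * (u m s)^2) powr (1/2)) (at s within {0..})"
  shows "(\<forall>m<0. (kconst r\<^sub>o \<tau> \<kappa> m)^2 < \<beta> \<longrightarrow>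
            (\<exists>A\<^sub>o>0. (\<beta> - (kconst r\<^sub>o \<tau> \<kappa> m)^2)
                 + (3*\<kappa>^2*(1 - (kconst r\<^sub>o \<tau> \<kappa> m)^2) - 1/2 * \<alpha> * A\<^sub>o powr (-2))
                   * (u m (A\<^sub>o * kconst r\<^sub>o \<tau> \<kappa> m))^2 = 0))
       \<and> (\<exists>c C. 0 < c \<and>
            (\<forall>\<^sub>F m in at_bot. \<forall>A\<^sub>o>0.
               (\<beta> - (kconst r\<^sub>o \<tau> \<kappa> m)^2)
                 + (3*\<kappa>^2*(1 - (kconst r\<^sub>o \<tau> \<kappa> m)^2) - 1/2 * \<alpha> * A\<^sub>o powr (-2))
                   * (u m (A\<^sub>o * kconst r\<^sub>o \<tau> \<kappa> m))^2 = 0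
               \<longrightarrow> c \<le> A\<^sub>o \<and> A\<^sub>o \<le> C))"
proof -
  have "\<forall>\<^sub>F m in at_bot. m < (0::real)"
    by simp
  then have "\<forall>\<^sub>F m in at_bot. 0 \<le> kconst r\<^sub>o \<tau> \<kappa> m \<and> (\<forall>s\<ge>0. r\<^sub>o \<le> u m s)"
    by eventually_elim (use assms kconst_pos in \<open>auto intro: less_imp_le\<close>)
  moreover have "continuous_on {0..} (u m)" if "m < 0" for m
    using u_ode[OF that] by (auto simp: continuous_on_eq_continuous_within intro: DERIV_continuous)
  ultimately show ?thesis
    using assms
    by (intro conjI allI impI balance_equation_has_root balance_equation_roots_eventually_bounded)
      (auto simp: eventually_conj_iff intro: kconst_pos kconst_tendsto_at_bot)
qed

end
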